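(* For all $\varepsilon>0$ and $A,r\in\mathbb{N}$ there exist $\delta>0$ and $N\in\mathbb{N}$ such that the following holds. Let $n_1,\ldots,n_r$ be positive integers with $n_i\leq An_j$ for all $i,j$ and $n=n_1+\cdots+n_r\geq N$; let $\Lambda=(\lambda_{i,j})$ be a symmetric non-negative $r\times r$ matrix that is connected and $\varepsilon$-separated; let $p_{i,j}=\lambda_{i,j}/\sqrt{n_in_j}$, $P=(p_{i,j})$, $M_{i,j}=p_{i,j}n_j$, and suppose $\rho(M)\geq 1+\varepsilon$. Then for all $i\in[r]$, $\Pr[\mathrm{GW}(\vec n,P,e_i)\text{ goes extinct}]\leq 1-\delta$.
   Context: $\mathrm{GW}(\vec n,P,x)$, for $x\in\mathbb{N}^r$, is the multi-type Galton–Watson process started with $x(i)$ individuals of type $i$, in which each individual of type $i$ independently has, for each $j\in[r]$, an independent $\mathrm{Binomial}(n_j,p_{i,j})$ number of children of type $j$. It goes extinct if its total population is finite. $e_i$ is the $i$-th standard basis vector. $\rho(M)$ is the largest eigenvalue of $M$. $\Lambda$ is $\varepsilon$-separated if for all $i,j$ either $\lambda_{i,j}=0$ or $\varepsilon\leq\lambda_{i,j}\leq 1/\varepsilon$; connected if the graph on $[r]$ with edges $\{i,j\}$ for $\lambda_{i,j}>0$ is connected. *)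

theory Defs
  imports "HOL-Probability.Probability" "Jordan_Normal_Form.Char_Poly"
begin

text \<open>Types are indexed by 0,...,r-1. A population is a function nat => nat, the
count of individuals of each type (zero outside [r]).\<close>

text \<open>One generation step of the multi-type Galton-Watson process GW(n,P,.):
starting from population x, every individual (type i, number k < x i) independently
has, for each type j, an independent Binomial(n j, P i j) number of children of type j.\<close>
definition gw_step :: "nat \<Rightarrow> (nat \<Rightarrow> nat) \<Rightarrow> (nat \<Rightarrow> nat \<Rightarrow> real) \<Rightarrow> (nat \<Rightarrow> nat) \<Rightarrow> (nat \<Rightarrow> nat) pmf" where
  "gw_step r n P x =
     map_pmf (\<lambda>c j. if j < r then (\<Sum>(i,k)\<in>{(i,k). i < r \<and> k < x i}. c (i,k,j)) else 0)
       (Pi_pmf {(i,k,j). i < r \<and> k < x i \<and> j < r} 0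
          (\<lambda>(i,k,j). binomial_pmf (n j) (P i j)))"

primrec gw_gen :: "nat \<Rightarrow> (nat \<Rightarrow> nat) \<Rightarrow> (nat \<Rightarrow> nat \<Rightarrow> real) \<Rightarrow> (nat \<Rightarrow> nat) \<Rightarrow> nat \<Rightarrow> (nat \<Rightarrow> nat) pmf" where
  "gw_gen r n P x 0 = return_pmf x"
| "gw_gen r n P x (Suc m) = bind_pmf (gw_gen r n P x m) (gw_step r n P)"

text \<open>Extinction probability: the process goes extinct (finite total population) iff
some generation is empty; the events "generation m is empty" increase in m
(the empty population is absorbing), so the probability is their supremum.\<close>
definition gw_extinction_prob :: "nat \<Rightarrow> (nat \<Rightarrow> nat) \<Rightarrow> (nat \<Rightarrow> nat \<Rightarrow> real) \<Rightarrow> (nat \<Rightarrow> nat) \<Rightarrow> real" where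
  "gw_extinction_prob r n P x =
     (SUP m. measure_pmf.prob (gw_gen r n P x m) {z. \<forall>j<r. z j = 0})"

definition basis_pop :: "nat \<Rightarrow> nat \<Rightarrow> nat" where
  "basis_pop i = (\<lambda>j. if j = i then 1 else 0)"

definition largest_eigenvalue :: "real mat \<Rightarrow> real" where
  "largest_eigenvalue M = Max {k. eigenvalue M k}"

definition eps_separated :: "real \<Rightarrow> nat \<Rightarrow> (nat \<Rightarrow> nat \<Rightarrow> real) \<Rightarrow> bool" where
  "eps_separated \<epsilon> r L = (\<forall>i<r. \<forall>j<r. L i j = 0 \<or> (\<epsilon> \<le> L i j \<and> L i j \<le> 1 / \<epsilon>))"

definition connected_mat :: "nat \<Rightarrow> (nat \<Rightarrow> nat \<Rightarrow> real) \<Rightarrow> bool" where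
  "connected_mat r L = (\<forall>i<r. \<forall>j<r. (i, j) \<in> {(a, b). a < r \<and> b < r \<and> L a b > 0}\<^sup>*)"

end

theory Submission
  imports Defs "Jordan_Normal_Form.Spectral_Radius"
begin

text \<open>Let f be the offspring generating function, f_i(s) = \<Prod>_j (1 - p_ij + p_ij s_j)^n_j.
If s \<in> [0,1]^r satisfies f(s) \<le> s, induction on the generation shows that the process
started from x goes extinct with probability at most \<Prod>_i s_i^x_i. For s = 1 - u the
inequality f(s) \<le> s holds as soon as u is small and (1 + \<epsilon>) u \<le> M u; such a u \<ge> 0 is
the absolute value of an eigenvector for the largest eigenvalue of M, which is real because
n_i M_ij is symmetric. This s is bounded away from 1 at one type only. Iterating f preserves
f(s) \<le> s, and as the type graph is connected and every edge carries mean offspring at least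
a = \<epsilon>/(A+1), each iteration spreads the gap, shrunk by the factor a/(1+a), to a new type;
after r - 1 iterations it has reached every type.\<close>

lemma measure_bind_pmf_le_expectation:
  fixes p :: "'a pmf" and f :: "'a \<Rightarrow> 'b pmf"
  assumes le: "\<And>y. measure_pmf.prob (f y) A \<le> g y" and int: "integrable (measure_pmf p) g"
  shows "measure_pmf.prob (bind_pmf p f) A \<le> measure_pmf.expectation p g"
proof -
  have g_nonneg: "\<And>y. 0 \<le> g y" using le order_trans measure_nonneg by metis
  have "ennreal (measure_pmf.prob (bind_pmf p f) A)
      = (\<integral>\<^sup>+y. ennreal (measure_pmf.prob (f y) A) \<partial>measure_pmf p)"
    by (simp add: measure_pmf.emeasure_eq_measure[symmetric])
  also have "\<dots> \<le> (\<integral>\<^sup>+y. ennreal (g y) \<partial>measure_pmf p)"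
    by (intro nn_integral_mono ennreal_leI le)
  also have "\<dots> = ennreal (measure_pmf.expectation p g)"
    by (intro nn_integral_eq_integral int) (simp add: g_nonneg)
  finally show ?thesis
    by (subst (asm) ennreal_le_iff) (auto intro!: integral_nonneg_AE simp: g_nonneg)
qed

lemma expectation_binomial_pmf_power:
  fixes a :: real
  assumes "p \<in> {0..1}"
  shows "measure_pmf.expectation (binomial_pmf m p) (\<lambda>v. a ^ v) = (1 - p + p * a) ^ m"
proof -
  have "measure_pmf.expectation (binomial_pmf m p) (\<lambda>v. a ^ v)
      = (\<Sum>k\<le>m. real (m choose k) * (p * a) ^ k * (1 - p) ^ (m - k))"
    using assms by (simp add: expectation_binomial_pmf' power_mult_distrib mult_ac)
  also have "\<dots> = (p * a + (1 - p)) ^ m" by (simp add: binomial_ring)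
  finally show ?thesis by (simp add: algebra_simps)
qed

lemma prod_Sigma_times:
  assumes "finite A" "\<And>i. i \<in> A \<Longrightarrow> finite (B i)" "finite C"
  shows "(\<Prod>t\<in>Sigma A (\<lambda>i. B i \<times> C). h t) = (\<Prod>i\<in>A. \<Prod>k\<in>B i. \<Prod>j\<in>C. h (i, k, j))"
proof -
  have "(\<Prod>t\<in>Sigma A (\<lambda>i. B i \<times> C). h t) = (\<Prod>i\<in>A. \<Prod>u\<in>B i \<times> C. h (i, u))"
    using prod.Sigma[of A "\<lambda>i. B i \<times> C" "\<lambda>i u. h (i, u)"] assms by simp
  also have "\<dots> = (\<Prod>i\<in>A. \<Prod>k\<in>B i. \<Prod>j\<in>C. h (i, k, j))"
    by (intro prod.cong refl) (simp add: prod.cartesian_product case_prod_beta)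
  finally show ?thesis .
qed

lemma pgf_factor_range:
  fixes p s :: real
  assumes "p \<in> {0..1}" "s \<in> {0..1}"
  shows "1 - p + p * s \<in> {0..1}"
proof -
  have "p * s \<le> p" using assms mult_left_le by auto
  moreover have "0 \<le> p * s" using assms by simp
  ultimately show ?thesis using assms by auto
qed

lemma one_minus_power_le_exp:
  fixes x :: real
  assumes "0 \<le> x" "x \<le> 1"
  shows "(1 - x) ^ k \<le> exp (- (real k * x))"
proof -
  have "(1 - x) ^ k \<le> exp (- x) ^ k"
    using assms exp_ge_add_one_self[of "- x"] by (intro power_mono) auto
  also have "\<dots> = exp (- (real k * x))" by (simp add: exp_of_nat_mult[symmetric])
  finally show ?thesis .
qed

lemma exp_le_one_minus:
  fixes x e :: real
  assumes "0 \<le> x" "x \<le> 1/2" "2 * x \<le> e"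
  shows "exp (- ((1 + e) * x)) \<le> 1 - x"
proof -
  have "- x - 2 * x\<^sup>2 \<le> ln (1 - x)" using ln_one_minus_pos_lower_bound assms by auto
  moreover have "x * (2 * x) \<le> x * e" using mult_left_mono[OF assms(3) assms(1)] .
  then have "- ((1 + e) * x) \<le> - x - 2 * x\<^sup>2"
    by (simp add: power2_eq_square algebra_simps)
  ultimately have "- ((1 + e) * x) \<le> ln (1 - x)" by linarith
  then have "exp (- ((1 + e) * x)) \<le> exp (ln (1 - x))" by simp
  also have "\<dots> = 1 - x" using assms by simp
  finally show ?thesis .
qed

lemma gw_gen_Suc_first_step:
  "gw_gen r n P x (Suc m) = bind_pmf (gw_step r n P x) (\<lambda>y. gw_gen r n P y m)"
proof (induction m arbitrary: x)
  case 0
  then show ?case by (simp add: bind_return_pmf bind_return_pmf')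
next
  case (Suc m)
  have "gw_gen r n P x (Suc (Suc m)) = bind_pmf (gw_gen r n P x (Suc m)) (gw_step r n P)"
    by (simp only: gw_gen.simps(2))
  also have "\<dots> = bind_pmf (bind_pmf (gw_step r n P x) (\<lambda>y. gw_gen r n P y m)) (gw_step r n P)"
    by (simp only: Suc.IH)
  also have "\<dots> = bind_pmf (gw_step r n P x) (\<lambda>y. bind_pmf (gw_gen r n P y m) (gw_step r n P))"
    by (rule bind_assoc_pmf)
  finally show ?case by simp
qed

definition offspring_pgf ::
  "nat \<Rightarrow> (nat \<Rightarrow> nat) \<Rightarrow> (nat \<Rightarrow> nat \<Rightarrow> real) \<Rightarrow> (nat \<Rightarrow> real) \<Rightarrow> nat \<Rightarrow> real" where
  "offspring_pgf r n P s i = (\<Prod>j<r. (1 - P i j + P i j * s j) ^ n j)"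

definition gw_supersolution ::
  "nat \<Rightarrow> (nat \<Rightarrow> nat) \<Rightarrow> (nat \<Rightarrow> nat \<Rightarrow> real) \<Rightarrow> (nat \<Rightarrow> real) \<Rightarrow> bool" where
  "gw_supersolution r n P s \<longleftrightarrow> (\<forall>j<r. s j \<in> {0..1}) \<and> (\<forall>i<r. offspring_pgf r n P s i \<le> s i)"

lemma expectation_gw_step_prod_power:
  assumes P: "\<And>i j. i < r \<Longrightarrow> j < r \<Longrightarrow> P i j \<in> {0..1}"
    and s: "\<And>j. j < r \<Longrightarrow> 0 \<le> s j"
  shows "measure_pmf.expectation (gw_step r n P x) (\<lambda>y. \<Prod>j<r. s j ^ y j)
       = (\<Prod>i<r. offspring_pgf r n P s i ^ x i)"
proof -
  define I where "I = {(i, k, j). i < r \<and> k < x i \<and> j < r}"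
  define J where "J = {(i, k). i < r \<and> k < x i}"
  have I: "I = Sigma {..<r} (\<lambda>i. {..<x i} \<times> {..<r})" unfolding I_def by auto
  have J: "J = Sigma {..<r} (\<lambda>i. {..<x i})" unfolding J_def by auto
  have regroup: "(\<Prod>j<r. s j ^ (\<Sum>(i, k)\<in>J. c (i, k, j))) = (\<Prod>t\<in>I. s (snd (snd t)) ^ c t)" for c
  proof -
    have "(\<Prod>j<r. s j ^ (\<Sum>(i, k)\<in>J. c (i, k, j))) = (\<Prod>j<r. \<Prod>(i, k)\<in>J. s j ^ c (i, k, j))"
      by (simp add: power_sum case_prod_beta)
    also have "\<dots> = (\<Prod>(i, k)\<in>J. \<Prod>j<r. s j ^ c (i, k, j))"
      using prod.swap[of "\<lambda>j t. s j ^ c (fst t, snd t, j)" J "{..<r}"] by (simp add: case_prod_beta)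
    also have "\<dots> = (\<Prod>i<r. \<Prod>k<x i. \<Prod>j<r. s j ^ c (i, k, j))"
      unfolding J using prod.Sigma[of "{..<r}" "\<lambda>i. {..<x i}" "\<lambda>i k. \<Prod>j<r. s j ^ c (i, k, j)"]
      by (simp add: case_prod_beta)
    also have "\<dots> = (\<Prod>t\<in>I. s (snd (snd t)) ^ c t)"
      unfolding I by (subst prod_Sigma_times) auto
    finally show ?thesis .
  qed
  have "measure_pmf.expectation (gw_step r n P x) (\<lambda>y. \<Prod>j<r. s j ^ y j)
      = measure_pmf.expectation (Pi_pmf I 0 (\<lambda>(i, k, j). binomial_pmf (n j) (P i j)))
          (\<lambda>c. \<Prod>t\<in>I. s (snd (snd t)) ^ c t)"
    unfolding gw_step_def I_def[symmetric] J_def[symmetric] by (simp add: regroup)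
  also have "\<dots> = (\<Prod>t\<in>I. measure_pmf.expectation ((\<lambda>(i, k, j). binomial_pmf (n j) (P i j)) t)
                      (\<lambda>v. s (snd (snd t)) ^ v))"
    using P s by (intro expectation_prod_Pi_pmf) (auto simp: I intro!: integrable_binomial_pmf)
  also have "\<dots> = (\<Prod>t\<in>I. (\<lambda>(i, k, j). (1 - P i j + P i j * s j) ^ n j) t)"
    by (intro prod.cong refl) (use P in \<open>auto simp: I_def expectation_binomial_pmf_power\<close>)
  also have "\<dots> = (\<Prod>i<r. offspring_pgf r n P s i ^ x i)"
    unfolding I by (subst prod_Sigma_times) (auto simp: offspring_pgf_def)
  finally show ?thesis .
qed

lemma offspring_pgf_range:
  assumes P: "\<And>i j. i < r \<Longrightarrow> j < r \<Longrightarrow> P i j \<in> {0..1}"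
    and s: "\<And>j. j < r \<Longrightarrow> s j \<in> {0..1}" and i: "i < r"
  shows "offspring_pgf r n P s i \<in> {0..1}"
  using pgf_factor_range[OF P[OF i] s] unfolding offspring_pgf_def
  by (auto intro!: prod_nonneg prod_le_1 power_le_one)

lemma offspring_pgf_mono:
  assumes P: "\<And>i j. i < r \<Longrightarrow> j < r \<Longrightarrow> P i j \<in> {0..1}"
    and s: "\<And>j. j < r \<Longrightarrow> 0 \<le> s j \<and> s j \<le> t j" and i: "i < r"
  shows "offspring_pgf r n P s i \<le> offspring_pgf r n P t i"
  unfolding offspring_pgf_def
proof (intro prod_mono conjI power_mono)
  fix j assume "j \<in> {..<r}"
  then show "0 \<le> 1 - P i j + P i j * s j" "1 - P i j + P i j * s j \<le> 1 - P i j + P i j * t j"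
    using P[OF i, of j] s[of j] by (auto simp: mult_left_mono)
  then show "0 \<le> (1 - P i j + P i j * s j) ^ n j" by simp
qed

lemma gw_supersolution_offspring_pgf:
  assumes P: "\<And>i j. i < r \<Longrightarrow> j < r \<Longrightarrow> P i j \<in> {0..1}"
    and s: "gw_supersolution r n P s"
  shows "gw_supersolution r n P (offspring_pgf r n P s)"
proof -
  have s01: "\<And>j. j < r \<Longrightarrow> s j \<in> {0..1}" and sup: "\<And>i. i < r \<Longrightarrow> offspring_pgf r n P s i \<le> s i"
    using s by (auto simp: gw_supersolution_def)
  have f01: "\<And>j. j < r \<Longrightarrow> offspring_pgf r n P s j \<in> {0..1}"
    by (rule offspring_pgf_range[OF P s01])
  have "offspring_pgf r n P (offspring_pgf r n P s) i \<le> offspring_pgf r n P s i" if "i < r" for i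
    using f01 sup by (intro offspring_pgf_mono[OF P _ that]) auto
  with f01 show ?thesis by (simp add: gw_supersolution_def)
qed

lemma gw_gen_prob_extinct_le:
  assumes P: "\<And>i j. i < r \<Longrightarrow> j < r \<Longrightarrow> P i j \<in> {0..1}"
    and s: "gw_supersolution r n P s"
  shows "measure_pmf.prob (gw_gen r n P x m) {z. \<forall>j<r. z j = 0} \<le> (\<Prod>i<r. s i ^ x i)"
proof (induction m arbitrary: x)
  case 0
  have "0 \<le> (\<Prod>i<r. s i ^ x i)" using s by (auto intro!: prod_nonneg simp: gw_supersolution_def)
  then show ?case by (cases "\<forall>j<r. x j = 0") (auto simp: measure_return_pmf)
next
  case (Suc m)
  have s01: "\<And>j. j < r \<Longrightarrow> s j \<in> {0..1}" using s by (simp add: gw_supersolution_def)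
  have "(\<Prod>j<r. s j ^ y j) \<in> {0..1}" for y :: "nat \<Rightarrow> nat"
    using s01 by (auto intro!: prod_nonneg prod_le_1 power_le_one)
  then have "integrable (measure_pmf (gw_step r n P x)) (\<lambda>y. \<Prod>j<r. s j ^ y j)"
    by (intro measure_pmf.integrable_const_bound[where B=1] AE_pmfI) auto
  then have "measure_pmf.prob (gw_gen r n P x (Suc m)) {z. \<forall>j<r. z j = 0}
      \<le> measure_pmf.expectation (gw_step r n P x) (\<lambda>y. \<Prod>j<r. s j ^ y j)"
    unfolding gw_gen_Suc_first_step by (rule measure_bind_pmf_le_expectation[OF Suc.IH])
  also have "\<dots> = (\<Prod>i<r. offspring_pgf r n P s i ^ x i)"
    using P s01 by (intro expectation_gw_step_prod_power) auto
  also have "\<dots> \<le> (\<Prod>i<r. s i ^ x i)"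
    using s offspring_pgf_range[OF P s01]
    by (intro prod_mono conjI power_mono zero_le_power) (auto simp: gw_supersolution_def)
  finally show ?case .
qed

lemma gw_extinction_prob_le_supersolution:
  assumes P: "\<And>i j. i < r \<Longrightarrow> j < r \<Longrightarrow> P i j \<in> {0..1}"
    and s: "gw_supersolution r n P s"
  shows "gw_extinction_prob r n P x \<le> (\<Prod>i<r. s i ^ x i)"
  unfolding gw_extinction_prob_def
  by (rule cSUP_least) (auto intro: gw_gen_prob_extinct_le[OF P s])

lemma prod_power_basis_pop:
  assumes "i < r"
  shows "(\<Prod>j<r. s j ^ basis_pop i j) = s i"
proof -
  have "(\<Prod>j<r. s j ^ basis_pop i j) = (\<Prod>j<r. if j = i then s j else 1)"
    by (intro prod.cong refl) (auto simp: basis_pop_def)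
  then show ?thesis using assms by simp
qed

lemma gw_supersolution_one_minus:
  assumes P: "\<And>i j. i < r \<Longrightarrow> j < r \<Longrightarrow> P i j \<in> {0..1}"
    and u: "\<And>j. j < r \<Longrightarrow> 0 \<le> u j \<and> u j \<le> c"
    and c: "c \<le> 1/2" "2 * c \<le> e"
    and Mu: "\<And>i. i < r \<Longrightarrow> (1 + e) * u i \<le> (\<Sum>j<r. P i j * real (n j) * u j)"
  shows "gw_supersolution r n P (\<lambda>j. 1 - u j)"
  unfolding gw_supersolution_def
proof (intro conjI allI impI)
  fix i assume i: "i < r"
  have "offspring_pgf r n P (\<lambda>j. 1 - u j) i = (\<Prod>j<r. (1 - P i j * u j) ^ n j)"
    unfolding offspring_pgf_def by (simp add: algebra_simps)
  also have "\<dots> \<le> (\<Prod>j<r. exp (- (real (n j) * (P i j * u j))))"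
  proof (intro prod_mono conjI)
    fix j assume j: "j \<in> {..<r}"
    have "0 \<le> P i j * u j" "P i j * u j \<le> 1"
      using P[OF i, of j] u[of j] c j by (auto intro: mult_le_one)
    then show "0 \<le> (1 - P i j * u j) ^ n j"
      "(1 - P i j * u j) ^ n j \<le> exp (- (real (n j) * (P i j * u j)))"
      by (auto intro: one_minus_power_le_exp)
  qed
  also have "\<dots> = exp (- (\<Sum>j<r. P i j * real (n j) * u j))"
    by (simp add: exp_sum[symmetric] sum_negf mult_ac)
  also have "\<dots> \<le> exp (- ((1 + e) * u i))" using Mu[OF i] by simp
  also have "\<dots> \<le> 1 - u i" using u[OF i] c by (intro exp_le_one_minus) auto
  finally show "offspring_pgf r n P (\<lambda>j. 1 - u j) i \<le> 1 - u i" .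
next
  fix j assume "j < r"
  then show "1 - u j \<in> {0..1}" using u[of j] c by auto
qed

lemma offspring_pgf_gap_along_edge:
  assumes P: "\<And>i j. i < r \<Longrightarrow> j < r \<Longrightarrow> P i j \<in> {0..1}"
    and s: "\<And>j. j < r \<Longrightarrow> s j \<in> {0..1}" and i: "i < r" and j: "j < r"
    and a: "0 < a" "a \<le> P i j * real (n j)"
  shows "a / (1 + a) * (1 - s j) \<le> 1 - offspring_pgf r n P s i"
proof -
  define f where "f k = (1 - P i k + P i k * s k) ^ n k" for k
  define y where "y = 1 - s j"
  have y: "0 \<le> y" "y \<le> 1" using s[OF j] by (auto simp: y_def)
  have pos: "0 < 1 + a * y" "0 < 1 + a" using a y by (auto simp: add_pos_nonneg)
  have "offspring_pgf r n P s i = f j * (\<Prod>k\<in>{..<r} - {j}. f k)"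
    unfolding offspring_pgf_def f_def using j by (simp add: prod.remove)
  also have "\<dots> \<le> f j"
    using pgf_factor_range[OF P[OF i] s] j unfolding f_def
    by (intro mult_left_le prod_le_1) (auto intro: power_le_one)
  also have "\<dots> = (1 - P i j * y) ^ n j" by (simp add: f_def y_def algebra_simps)
  also have "\<dots> \<le> exp (- (real (n j) * (P i j * y)))"
    using P[OF i j] y by (intro one_minus_power_le_exp) (auto intro: mult_le_one)
  also have "\<dots> \<le> exp (- (a * y))"
    using a y mult_right_mono[OF a(2) y(1)] by (simp add: mult_ac)
  also have "\<dots> \<le> 1 / (1 + a * y)"
    using exp_ge_add_one_self[of "a * y"] pos by (simp add: exp_minus field_simps)
  finally have "a * y / (1 + a * y) \<le> 1 - offspring_pgf r n P s i"
    using pos by (simp add: field_simps)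
  moreover have "a * y / (1 + a) \<le> a * y / (1 + a * y)"
    using pos a y by (intro divide_left_mono) (auto simp: mult_left_le)
  ultimately show ?thesis by (simp add: y_def)
qed

lemma rtrancl_edge_into_set:
  assumes "(b, a) \<in> R\<^sup>*" "b \<notin> T" "a \<in> T"
  shows "\<exists>y x. (y, x) \<in> R \<and> y \<notin> T \<and> x \<in> T"
  using assms by (induction rule: rtrancl_induct) auto

definition gap_types :: "nat \<Rightarrow> (nat \<Rightarrow> real) \<Rightarrow> real \<Rightarrow> nat set" where
  "gap_types r s b = {i. i < r \<and> b \<le> 1 - s i}"

lemma gap_types_subset: "gap_types r s b \<subseteq> {..<r}"
  unfolding gap_types_def by auto

lemma finite_gap_types [simp]: "finite (gap_types r s b)"
  by (rule finite_subset[OF gap_types_subset finite_lessThan])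

lemma gw_supersolution_gap_spreads:
  fixes a b :: real
  assumes P: "\<And>i j. i < r \<Longrightarrow> j < r \<Longrightarrow> P i j \<in> {0..1}"
    and s: "gw_supersolution r n P s" and b: "0 \<le> b" and a: "0 < a"
    and edge: "\<And>i j. i < r \<Longrightarrow> j < r \<Longrightarrow> L i j > 0 \<Longrightarrow> a \<le> P i j * real (n j)"
    and conn: "connected_mat r L"
    and nonempty: "gap_types r s b \<noteq> {}"
  shows "min (Suc (card (gap_types r s b))) r
    \<le> card (gap_types r (offspring_pgf r n P s) (a / (1 + a) * b))"
proof -
  define T where "T = gap_types r s b"
  define T' where "T' = gap_types r (offspring_pgf r n P s) (a / (1 + a) * b)"
  have s01: "\<And>j. j < r \<Longrightarrow> s j \<in> {0..1}" using s by (simp add: gw_supersolution_def)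
  have T_r: "T \<subseteq> {..<r}" and T'_r: "T' \<subseteq> {..<r}"
    unfolding T_def T'_def by (rule gap_types_subset)+
  have "a / (1 + a) * b \<le> b" by (intro mult_left_le_one_le) (use a b in auto)
  moreover have "1 - s i \<le> 1 - offspring_pgf r n P s i" if "i < r" for i
    using s that by (simp add: gw_supersolution_def)
  ultimately have T_sub: "T \<subseteq> T'" unfolding T_def T'_def gap_types_def by fastforce
  show ?thesis
  proof (cases "T = {..<r}")
    case True
    then have "T' = {..<r}" using T_sub T'_r by blast
    then show ?thesis unfolding T'_def by simp
  next
    case False
    then obtain outside where outside: "outside < r" "outside \<notin> T" using T_r by blast
    obtain inside where inside: "inside \<in> T" using nonempty unfolding T_def by auto
    then have "(outside, inside) \<in> {(i, j). i < r \<and> j < r \<and> L i j > 0}\<^sup>*"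
      using conn outside unfolding connected_mat_def T_def gap_types_def by auto
    then obtain y x where yx: "y < r" "x < r" "L y x > 0" "y \<notin> T" "x \<in> T"
      using rtrancl_edge_into_set[OF _ outside(2) inside] by blast
    have "a / (1 + a) * b \<le> a / (1 + a) * (1 - s x)"
      using yx(5) a unfolding T_def gap_types_def by (intro mult_left_mono) auto
    also have "\<dots> \<le> 1 - offspring_pgf r n P s y"
      using yx by (intro offspring_pgf_gap_along_edge[OF P s01] a edge)
    finally have "insert y T \<subseteq> T'" using T_sub yx(1) unfolding T'_def gap_types_def by auto
    then have "card (insert y T) \<le> card T'" by (intro card_mono) (simp add: T'_def)
    moreover have "card (insert y T) = Suc (card T)" using yx(4) by (simp add: T_def)
    ultimately have "Suc (card T) \<le> card T'" by simp
    then show ?thesis unfolding T_def T'_def by linarith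
  qed
qed

lemma gw_supersolution_uniform_gap:
  fixes a c :: real
  assumes P: "\<And>i j. i < r \<Longrightarrow> j < r \<Longrightarrow> P i j \<in> {0..1}"
    and s0: "gw_supersolution r n P s0" and i0: "i0 < r" "c \<le> 1 - s0 i0"
    and c: "0 \<le> c" and a: "0 < a"
    and edge: "\<And>i j. i < r \<Longrightarrow> j < r \<Longrightarrow> L i j > 0 \<Longrightarrow> a \<le> P i j * real (n j)"
    and conn: "connected_mat r L"
  shows "\<exists>s. gw_supersolution r n P s \<and> (\<forall>i<r. c * (a / (1 + a)) ^ (r - 1) \<le> 1 - s i)"
proof -
  have "\<exists>s. gw_supersolution r n P s \<and> min (Suc t) r \<le> card (gap_types r s (c * (a / (1 + a)) ^ t))"
    for t
  proof (induction t)
    case 0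
    have "i0 \<in> gap_types r s0 (c * (a / (1 + a)) ^ 0)" using i0 by (simp add: gap_types_def)
    then have "1 \<le> card (gap_types r s0 (c * (a / (1 + a)) ^ 0))"
      by (auto intro!: Suc_leI simp: card_gt_0_iff)
    then show ?case using s0 by (intro exI[of _ s0]) simp
  next
    case (Suc t)
    then obtain s where s: "gw_supersolution r n P s"
      and card: "min (Suc t) r \<le> card (gap_types r s (c * (a / (1 + a)) ^ t))" by blast
    have "0 < card (gap_types r s (c * (a / (1 + a)) ^ t))"
      using card i0 by (simp add: min_def split: if_splits)
    then have nonempty: "gap_types r s (c * (a / (1 + a)) ^ t) \<noteq> {}" by auto
    have "0 \<le> c * (a / (1 + a)) ^ t" using c a by simp
    from gw_supersolution_gap_spreads[OF P s this a edge conn nonempty]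
    have "min (Suc (card (gap_types r s (c * (a / (1 + a)) ^ t)))) r
        \<le> card (gap_types r (offspring_pgf r n P s) (c * (a / (1 + a)) ^ Suc t))"
      by (simp add: mult_ac)
    moreover have "min (Suc (Suc t)) r \<le> min (Suc (card (gap_types r s (c * (a / (1 + a)) ^ t)))) r"
      using card by (simp add: min_def split: if_splits)
    ultimately show ?case
      using gw_supersolution_offspring_pgf[OF P s] by (intro exI[of _ "offspring_pgf r n P s"]) simp
  qed
  from this[of "r - 1"] obtain s where s: "gw_supersolution r n P s"
    and card: "min (Suc (r - 1)) r \<le> card (gap_types r s (c * (a / (1 + a)) ^ (r - 1)))"
    by blast
  have "gap_types r s (c * (a / (1 + a)) ^ (r - 1)) = {..<r}"
    using card i0 card_mono[OF finite_lessThan gap_types_subset, of r s]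
    by (intro card_subset_eq gap_types_subset) (simp_all add: le_antisym)
  then show ?thesis using s unfolding gap_types_def by blast
qed

lemma eigenvalue_of_real_map_mat:
  fixes M :: "real mat"
  assumes M: "M \<in> carrier_mat r r"
    and ev: "eigenvalue (map_mat complex_of_real M) (complex_of_real x)"
  shows "eigenvalue M x"
proof -
  have "poly (char_poly (map_mat complex_of_real M)) (complex_of_real x) = 0"
    using ev eigenvalue_root_char_poly[of "map_mat complex_of_real M" r] M by simp
  then have "poly (char_poly M) x = 0"
    by (simp add: of_real_hom.char_poly_hom[OF M] of_real_hom.poly_map_poly)
  then show ?thesis using eigenvalue_root_char_poly[OF M] by simp
qed

text \<open>The quadratic form z* W M z is real when W M is symmetric, and equals \<lambda> z* W z.\<close>

lemma eigenvalue_real_if_symmetrizable: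
  fixes w :: "nat \<Rightarrow> real" and m :: "nat \<Rightarrow> nat \<Rightarrow> real"
  assumes w: "\<And>i. i < r \<Longrightarrow> 0 < w i"
    and sym: "\<And>i j. i < r \<Longrightarrow> j < r \<Longrightarrow> w i * m i j = w j * m j i"
    and ev: "eigenvalue (map_mat complex_of_real (mat r r (\<lambda>(i, j). m i j))) lam"
  shows "Im lam = 0"
proof -
  obtain z where z: "z \<in> carrier_vec r" "z \<noteq> 0\<^sub>v r"
    and eigen: "map_mat complex_of_real (mat r r (\<lambda>(i, j). m i j)) *\<^sub>v z = lam \<cdot>\<^sub>v z"
    using ev unfolding eigenvalue_def eigenvector_def by auto
  have row: "(\<Sum>j<r. of_real (m i j) * z $ j) = lam * z $ i" if "i < r" for i
    using arg_cong[OF eigen, of "\<lambda>v. v $ i"] that z(1)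
    by (simp add: scalar_prod_def atLeast0LessThan)
  define S where "S = (\<Sum>i<r. \<Sum>j<r. of_real (w i * m i j) * (cnj (z $ i) * z $ j))"
  define T where "T = (\<Sum>i<r. w i * (cmod (z $ i))\<^sup>2)"
  have "S = (\<Sum>i<r. of_real (w i) * cnj (z $ i) * (\<Sum>j<r. of_real (m i j) * z $ j))"
    unfolding S_def by (simp add: sum_distrib_left mult_ac)
  also have "\<dots> = (\<Sum>i<r. lam * of_real (w i * (cmod (z $ i))\<^sup>2))"
    using row complex_norm_square by (intro sum.cong refl) (simp add: mult_ac)
  finally have S_eq: "S = lam * of_real T"
    unfolding T_def by (simp add: sum_distrib_left)
  have "cnj S = (\<Sum>i<r. \<Sum>j<r. of_real (w i * m i j) * (z $ i * cnj (z $ j)))"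
    unfolding S_def by simp
  also have "\<dots> = (\<Sum>i<r. \<Sum>j<r. of_real (w j * m j i) * (cnj (z $ j) * z $ i))"
    by (intro sum.cong refl) (simp add: sym mult_ac)
  also have "\<dots> = S" unfolding S_def by (rule sum.swap)
  finally have "Im S = 0" by (simp add: complex_eq_iff)
  obtain i where i: "i < r" "z $ i \<noteq> 0"
    using z by (metis eq_vecI index_zero_vec(1) dim_vec carrier_vecD index_zero_vec(2))
  have "0 < w i * (cmod (z $ i))\<^sup>2" using w[OF i(1)] i(2) by simp
  also have "\<dots> \<le> T" unfolding T_def using i(1) w
    by (intro member_le_sum) (simp_all add: less_imp_le)
  finally have "0 < T" .
  with \<open>Im S = 0\<close> S_eq show ?thesis by simp
qed

lemma eigenvalue_exists_if_symmetrizable: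
  fixes w :: "nat \<Rightarrow> real" and m :: "nat \<Rightarrow> nat \<Rightarrow> real"
  assumes r: "0 < r" and w: "\<And>i. i < r \<Longrightarrow> 0 < w i"
    and sym: "\<And>i j. i < r \<Longrightarrow> j < r \<Longrightarrow> w i * m i j = w j * m j i"
  shows "\<exists>k. eigenvalue (mat r r (\<lambda>(i, j). m i j)) k"
proof -
  let ?M = "mat r r (\<lambda>(i, j). m i j)"
  obtain lam where "lam \<in> spectrum (map_mat complex_of_real ?M)"
    using spectrum_non_empty[of "map_mat complex_of_real ?M" r] r by auto
  then have ev: "eigenvalue (map_mat complex_of_real ?M) lam" by (simp add: spectrum_def)
  then have "lam = complex_of_real (Re lam)"
    using eigenvalue_real_if_symmetrizable[OF w sym] by (simp add: complex_eq_iff)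
  with ev have "eigenvalue ?M (Re lam)"
    by (intro eigenvalue_of_real_map_mat[of _ r]) auto
  then show ?thesis by blast
qed

text \<open>largest_eigenvalue is a Max, which is unspecified on the empty set, so some real
eigenvalue has to be exhibited first.\<close>

lemma eigenvalue_largest_eigenvalue:
  assumes M: "M \<in> carrier_mat r r" and "eigenvalue M k"
  shows "eigenvalue M (largest_eigenvalue M)"
  using Max_in[OF card_finite_spectrum(1)[OF M, unfolded spectrum_def]] assms(2)
  unfolding largest_eigenvalue_def by auto

lemma eigenvalue_nonneg_mat_abs_eigenvector:
  fixes m :: "nat \<Rightarrow> nat \<Rightarrow> real"
  assumes ev: "eigenvalue (mat r r (\<lambda>(i, j). m i j)) k" and k: "0 \<le> k"
    and m: "\<And>i j. i < r \<Longrightarrow> j < r \<Longrightarrow> 0 \<le> m i j"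
  shows "\<exists>u. (\<forall>j<r. 0 \<le> u j) \<and> (\<exists>j<r. u j > 0) \<and> (\<forall>i<r. k * u i \<le> (\<Sum>j<r. m i j * u j))"
proof -
  obtain v where v: "v \<in> carrier_vec r" "v \<noteq> 0\<^sub>v r"
    and eigen: "mat r r (\<lambda>(i, j). m i j) *\<^sub>v v = k \<cdot>\<^sub>v v"
    using ev unfolding eigenvalue_def eigenvector_def by auto
  have row: "(\<Sum>j<r. m i j * v $ j) = k * v $ i" if "i < r" for i
    using arg_cong[OF eigen, of "\<lambda>v. v $ i"] that v(1)
    by (simp add: scalar_prod_def atLeast0LessThan)
  obtain i where i: "i < r" "v $ i \<noteq> 0"
    using v by (metis eq_vecI index_zero_vec(1) dim_vec carrier_vecD index_zero_vec(2))
  have "k * \<bar>v $ i\<bar> \<le> (\<Sum>j<r. m i j * \<bar>v $ j\<bar>)" if "i < r" for i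
  proof -
    have "k * \<bar>v $ i\<bar> = \<bar>\<Sum>j<r. m i j * v $ j\<bar>" using row[OF that] k by (simp add: abs_mult)
    also have "\<dots> \<le> (\<Sum>j<r. \<bar>m i j * v $ j\<bar>)" by (rule sum_abs)
    also have "\<dots> = (\<Sum>j<r. m i j * \<bar>v $ j\<bar>)" using m that by (simp add: abs_mult)
    finally show ?thesis .
  qed
  then show ?thesis using i by (intro exI[of _ "\<lambda>j. \<bar>v $ j\<bar>"]) auto
qed

lemma largest_eigenvalue_subinvariant_vector:
  fixes w :: "nat \<Rightarrow> real" and m :: "nat \<Rightarrow> nat \<Rightarrow> real"
  assumes r: "0 < r" and w: "\<And>i. i < r \<Longrightarrow> 0 < w i"
    and sym: "\<And>i j. i < r \<Longrightarrow> j < r \<Longrightarrow> w i * m i j = w j * m j i"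
    and m: "\<And>i j. i < r \<Longrightarrow> j < r \<Longrightarrow> 0 \<le> m i j"
    and c: "0 \<le> c" "c \<le> largest_eigenvalue (mat r r (\<lambda>(i, j). m i j))"
  shows "\<exists>u. (\<forall>j<r. 0 \<le> u j) \<and> (\<exists>j<r. u j > 0) \<and> (\<forall>i<r. c * u i \<le> (\<Sum>j<r. m i j * u j))"
proof -
  let ?M = "mat r r (\<lambda>(i, j). m i j)"
  have "\<exists>k. eigenvalue ?M k" using r w sym by (rule eigenvalue_exists_if_symmetrizable)
  then have ev: "eigenvalue ?M (largest_eigenvalue ?M)"
    by (auto intro: eigenvalue_largest_eigenvalue[of _ r])
  have nonneg: "0 \<le> largest_eigenvalue ?M" using c by linarith
  from ev nonneg m have "\<exists>u. (\<forall>j<r. 0 \<le> u j) \<and> (\<exists>j<r. u j > 0) \<and>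
      (\<forall>i<r. largest_eigenvalue ?M * u i \<le> (\<Sum>j<r. m i j * u j))"
    by (rule eigenvalue_nonneg_mat_abs_eigenvector)
  then obtain u where u: "\<forall>j<r. 0 \<le> u j" "\<exists>j<r. u j > 0"
    and Mu: "\<forall>i<r. largest_eigenvalue ?M * u i \<le> (\<Sum>j<r. m i j * u j)"
    by blast
  have "c * u i \<le> (\<Sum>j<r. m i j * u j)" if "i < r" for i
  proof -
    have "c * u i \<le> largest_eigenvalue ?M * u i" using c(2) u(1) that by (intro mult_right_mono) auto
    also have "\<dots> \<le> (\<Sum>j<r. m i j * u j)" using Mu that by blast
    finally show ?thesis .
  qed
  with u show ?thesis by blast
qed

lemma gw_extinction_prob_le_of_subinvariant:
  fixes e a :: real
  assumes P: "\<And>i j. i < r \<Longrightarrow> j < r \<Longrightarrow> P i j \<in> {0..1}"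
    and e: "0 < e"
    and u: "\<And>j. j < r \<Longrightarrow> 0 \<le> u j" "\<exists>j<r. 0 < u j"
    and Mu: "\<And>i. i < r \<Longrightarrow> (1 + e) * u i \<le> (\<Sum>j<r. P i j * real (n j) * u j)"
    and a: "0 < a"
    and edge: "\<And>i j. i < r \<Longrightarrow> j < r \<Longrightarrow> L i j > 0 \<Longrightarrow> a \<le> P i j * real (n j)"
    and conn: "connected_mat r L"
    and i: "i < r"
  shows "gw_extinction_prob r n P (basis_pop i) \<le> 1 - min (1/2) (e/2) * (a / (1 + a)) ^ (r - 1)"
proof -
  define c where "c = min (1/2) (e/2)"
  have c: "0 < c" "c \<le> 1/2" "2 * c \<le> e" using e unfolding c_def by auto
  obtain i0 where i0: "i0 < r" and max: "\<And>j. j < r \<Longrightarrow> u j \<le> u i0"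
    using Max_in[of "u ` {..<r}"] Max_ge[of "u ` {..<r}"] i by fastforce
  have u_i0: "0 < u i0" using u(2) max by force
  define u' where "u' j = c / u i0 * u j" for j
  have u': "0 \<le> u' j \<and> u' j \<le> c" if "j < r" for j
    using u(1)[OF that] max[OF that] u_i0 c unfolding u'_def by (simp add: field_simps)
  have Mu': "(1 + e) * u' i \<le> (\<Sum>j<r. P i j * real (n j) * u' j)" if "i < r" for i
    using mult_left_mono[OF Mu[OF that], of "c / u i0"] c u_i0
    unfolding u'_def by (simp add: sum_distrib_left mult_ac)
  have s0: "gw_supersolution r n P (\<lambda>j. 1 - u' j)"
    using P u' c(2,3) Mu' by (rule gw_supersolution_one_minus)
  have "c \<le> 1 - (1 - u' i0)" using u_i0 unfolding u'_def by simp
  from gw_supersolution_uniform_gap[OF P s0 i0 this _ a edge conn] c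
  obtain s where s: "gw_supersolution r n P s"
    and gap: "\<forall>i<r. c * (a / (1 + a)) ^ (r - 1) \<le> 1 - s i" by auto
  have "gw_extinction_prob r n P (basis_pop i) \<le> (\<Prod>j<r. s j ^ basis_pop i j)"
    by (rule gw_extinction_prob_le_supersolution[OF P s])
  also have "\<dots> = s i" by (rule prod_power_basis_pop[OF i])
  also have "\<dots> \<le> 1 - c * (a / (1 + a)) ^ (r - 1)" using gap i by force
  finally show ?thesis unfolding c_def .
qed

lemma nat_le_of_sum_le_comparable:
  fixes n :: "nat \<Rightarrow> nat"
  assumes ratio: "\<forall>i<r. n i \<le> A * n j" and j: "j < r" "0 < n j"
    and sum: "r * A * K \<le> (\<Sum>i<r. n i)"
  shows "K \<le> n j"
proof -
  have "r * A * K \<le> (\<Sum>i<r. n i)" by (rule sum)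
  also have "\<dots> \<le> (\<Sum>i<r. A * n j)" using ratio by (intro sum_mono) auto
  also have "\<dots> = r * A * n j" by simp
  finally have "r * A * K \<le> r * A * n j" .
  moreover have "0 < A" using ratio j by (metis mult_eq_0_iff not_gr0 le_zero_eq)
  ultimately show ?thesis using j by simp
qed

lemma divide_sqrt_mult_in_unit:
  fixes \<epsilon> l x y :: real
  assumes "0 < \<epsilon>" "0 \<le> l" "l \<le> 1 / \<epsilon>" "1 / \<epsilon> \<le> x" "1 / \<epsilon> \<le> y"
  shows "l / sqrt (x * y) \<in> {0..1}"
proof -
  have "(1 / \<epsilon>) * (1 / \<epsilon>) \<le> x * y"
    using assms by (intro mult_mono) auto
  then have "1 / \<epsilon> \<le> sqrt (x * y)"
    using assms(1) by (metis less_eq_real_def real_le_rsqrt zero_le_divide_1_iff power2_eq_square)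
  with assms show ?thesis by (auto simp: divide_le_eq_1)
qed

lemma mean_offspring_lower_bound:
  fixes \<epsilon> l :: real and ni nj A :: nat
  assumes "0 < \<epsilon>" "\<epsilon> \<le> l" "0 < ni" "0 < nj" "ni \<le> A * nj"
  shows "\<epsilon> / (real A + 1) \<le> l / sqrt (real (ni * nj)) * real nj"
proof -
  have "real ni \<le> real A * real nj" using assms(5) by (metis of_nat_le_iff of_nat_mult)
  then have "real ni * real nj \<le> ((real A + 1) * real nj) * ((real A + 1) * real nj)"
    by (intro mult_mono) (simp_all add: algebra_simps)
  then have "sqrt (real (ni * nj)) \<le> sqrt (((real A + 1) * real nj)\<^sup>2)"
    by (simp only: power2_eq_square of_nat_mult real_sqrt_le_iff)
  then have sq: "sqrt (real (ni * nj)) \<le> (real A + 1) * real nj" using assms(4) by simp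
  have pos: "0 < sqrt (real (ni * nj))" using assms(3,4) by simp
  have "\<epsilon> / (real A + 1) = \<epsilon> * real nj / ((real A + 1) * real nj)" using assms(4) by simp
  also have "\<dots> \<le> l * real nj / ((real A + 1) * real nj)"
    using assms by (intro divide_right_mono mult_right_mono) auto
  also have "\<dots> \<le> l * real nj / sqrt (real (ni * nj))"
    using sq pos assms by (intro divide_left_mono) auto
  finally show ?thesis by simp
qed

lemma gw_extinction_prob_le_explicit_bound:
  fixes \<epsilon> :: real and A r :: nat and n :: "nat \<Rightarrow> nat" and L :: "nat \<Rightarrow> nat \<Rightarrow> real"
  assumes eps: "\<epsilon> > 0"
    and npos: "\<forall>i<r. n i > 0"
    and ratio: "\<forall>i<r. \<forall>j<r. n i \<le> A * n j"
    and large: "r * A * nat \<lceil>1 / \<epsilon>\<rceil> \<le> (\<Sum>i<r. n i)"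
    and symL: "\<forall>i<r. \<forall>j<r. L i j = L j i \<and> L i j \<ge> 0"
    and conn: "connected_mat r L"
    and sep: "eps_separated \<epsilon> r L"
    and ev: "1 + \<epsilon> \<le> largest_eigenvalue (mat r r (\<lambda>(i, j). L i j / sqrt (real (n i * n j)) * real (n j)))"
    and i: "i < r"
  shows "gw_extinction_prob r n (\<lambda>i j. L i j / sqrt (real (n i * n j))) (basis_pop i)
     \<le> 1 - min (1/2) (\<epsilon>/2) * ((\<epsilon> / (real A + 1)) / (1 + \<epsilon> / (real A + 1))) ^ (r - 1)"
proof -
  define P where "P i j = L i j / sqrt (real (n i * n j))" for i j
  have L: "L i j = 0 \<or> \<epsilon> \<le> L i j \<and> L i j \<le> 1 / \<epsilon>" "0 \<le> L i j" if "i < r" "j < r" for i j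
    using sep symL that unfolding eps_separated_def by auto
  have n_large: "1 / \<epsilon> \<le> real (n j)" if "j < r" for j
  proof -
    have "nat \<lceil>1 / \<epsilon>\<rceil> \<le> n j"
      using nat_le_of_sum_le_comparable[of r n A j] ratio npos large that by blast
    then show ?thesis by linarith
  qed
  have P: "P i j \<in> {0..1}" if "i < r" "j < r" for i j
    using L[OF that] eps n_large that unfolding P_def of_nat_mult
    by (intro divide_sqrt_mult_in_unit[OF eps]) (auto simp: order_trans[OF _ less_imp_le])
  have edge: "\<epsilon> / (real A + 1) \<le> P i j * real (n j)" if "i < r" "j < r" "L i j > 0" for i j
    using L[OF that(1,2)] that npos ratio unfolding P_def
    by (intro mean_offspring_lower_bound[OF eps]) auto
  have r: "0 < r" and w: "\<And>i. i < r \<Longrightarrow> 0 < real (n i)" using i npos by auto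
  have sym: "real (n i) * (P i j * real (n j)) = real (n j) * (P j i * real (n i))"
    if "i < r" "j < r" for i j
    using symL that unfolding P_def by (simp add: mult_ac)
  have m: "0 \<le> P i j * real (n j)" if "i < r" "j < r" for i j using P[OF that] by simp
  have c: "0 \<le> 1 + \<epsilon>" "1 + \<epsilon> \<le> largest_eigenvalue (mat r r (\<lambda>(i, j). P i j * real (n j)))"
    using ev eps unfolding P_def by simp_all
  from r w sym m c have "\<exists>u. (\<forall>j<r. 0 \<le> u j) \<and> (\<exists>j<r. u j > 0) \<and>
      (\<forall>i<r. (1 + \<epsilon>) * u i \<le> (\<Sum>j<r. P i j * real (n j) * u j))"
    by (rule largest_eigenvalue_subinvariant_vector)
  then obtain u where u: "\<forall>j<r. 0 \<le> u j" "\<exists>j<r. u j > 0"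
    and Mu: "\<forall>i<r. (1 + \<epsilon>) * u i \<le> (\<Sum>j<r. P i j * real (n j) * u j)"
    by blast
  from gw_extinction_prob_le_of_subinvariant[OF P eps _ u(2) _ _ edge conn i] u(1) Mu eps
  show ?thesis unfolding P_def by (simp add: add_pos_pos)
qed

theorem lemma3p1:
  fixes \<epsilon> :: real and A r :: nat
  assumes "\<epsilon> > 0"
  shows "\<exists>\<delta>::real. \<delta> > 0 \<and> (\<exists>N::nat. \<forall>(n::nat \<Rightarrow> nat) (L::nat \<Rightarrow> nat \<Rightarrow> real).
     (\<forall>i<r. n i > 0) \<longrightarrow>
     (\<forall>i<r. \<forall>j<r. n i \<le> A * n j) \<longrightarrow>
     (\<Sum>i<r. n i) \<ge> N \<longrightarrow>
     (\<forall>i<r. \<forall>j<r. L i j = L j i \<and> L i j \<ge> 0) \<longrightarrow>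
     connected_mat r L \<longrightarrow>
     eps_separated \<epsilon> r L \<longrightarrow>
     (let P = (\<lambda>i j. L i j / sqrt (real (n i * n j)));
          M = mat r r (\<lambda>(i, j). P i j * real (n j))
      in largest_eigenvalue M \<ge> 1 + \<epsilon> \<longrightarrow>
         (\<forall>i<r. gw_extinction_prob r n P (basis_pop i) \<le> 1 - \<delta>)))"
proof -
  define \<delta> where "\<delta> = min (1/2) (\<epsilon>/2) * ((\<epsilon> / (real A + 1)) / (1 + \<epsilon> / (real A + 1))) ^ (r - 1)"
  show ?thesis
    unfolding Let_def
  proof (intro exI[of _ \<delta>] conjI exI[of _ "r * A * nat \<lceil>1 / \<epsilon>\<rceil>"] allI impI)
    show "0 < \<delta>" unfolding \<delta>_def using assms by (simp add: add_pos_pos)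
  qed (unfold \<delta>_def, rule gw_extinction_prob_le_explicit_bound[OF assms]; assumption)
qed

end
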